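(* Let $H$ and $\tilde H$ be two dephased $d\times d$ complex Hadamard matrices with $\tilde H=D_1P_1HP_2D_2$, where $D_1,D_2$ are diagonal unitary matrices and $P_1,P_2$ are permutation matrices. Let $\{C_1,C_2\}$ be an ER pair of columns of $H$, and let $\tilde C_1,\tilde C_2$ be the columns of $\tilde H$ into which the columns $C_1,C_2$ of $H$ are carried by this equivalence (i.e. by the column permutation $P_2$). Then $\{\tilde C_1,\tilde C_2\}$ is an ER pair of columns of $\tilde H$.
   Context: A $d\times d$ complex Hadamard matrix has unimodular entries and pairwise orthogonal columns; it is dephased if its first row and first column consist of $1$'s. Two distinct columns $C_A,C_B$ of a complex Hadamard matrix form an ER pair if $\overline{(C_A)_j}(C_B)_j\in\{1,-1\}$ for every $j=0,\dots,d-1$. *)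

theory Defs
  imports Complex_Main "HOL-Combinatorics.Permutations"
begin

text \<open>d x d complex matrices are functions nat => nat => complex; only entries with
  indices below d are relevant. Indices run over 0..d-1.\<close>

type_synonym cmat = "nat \<Rightarrow> nat \<Rightarrow> complex"

definition mat_mult :: "nat \<Rightarrow> cmat \<Rightarrow> cmat \<Rightarrow> cmat" where
  "mat_mult d A B = (\<lambda>i j. \<Sum>k<d. A i k * B k j)"

definition mat_eq :: "nat \<Rightarrow> cmat \<Rightarrow> cmat \<Rightarrow> bool" where
  "mat_eq d A B \<longleftrightarrow> (\<forall>i<d. \<forall>j<d. A i j = B i j)"

definition complex_hadamard :: "nat \<Rightarrow> cmat \<Rightarrow> bool" where
  "complex_hadamard d H \<longleftrightarrow>
     (\<forall>i<d. \<forall>j<d. cmod (H i j) = 1) \<and>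
     (\<forall>a<d. \<forall>b<d. a \<noteq> b \<longrightarrow> (\<Sum>j<d. cnj (H j a) * H j b) = 0)"

definition dephased :: "nat \<Rightarrow> cmat \<Rightarrow> bool" where
  "dephased d H \<longleftrightarrow> (\<forall>j<d. H 0 j = 1 \<and> H j 0 = 1)"

definition diag_unitary :: "nat \<Rightarrow> cmat \<Rightarrow> bool" where
  "diag_unitary d D \<longleftrightarrow>
     (\<forall>i<d. \<forall>j<d. i \<noteq> j \<longrightarrow> D i j = 0) \<and> (\<forall>i<d. cmod (D i i) = 1)"

text \<open>P is the permutation matrix of the permutation \<sigma> of {0..d-1}:
  P i j = 1 iff i = \<sigma> j, so column j of H*P is column \<sigma> j of H.\<close>
definition perm_mat_of :: "nat \<Rightarrow> (nat \<Rightarrow> nat) \<Rightarrow> cmat \<Rightarrow> bool" where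
  "perm_mat_of d \<sigma> P \<longleftrightarrow> \<sigma> permutes {..<d} \<and>
     (\<forall>i<d. \<forall>j<d. P i j = (if i = \<sigma> j then 1 else 0))"

definition perm_mat :: "nat \<Rightarrow> cmat \<Rightarrow> bool" where
  "perm_mat d P \<longleftrightarrow> (\<exists>\<sigma>. perm_mat_of d \<sigma> P)"

definition ER_pair :: "nat \<Rightarrow> cmat \<Rightarrow> nat \<Rightarrow> nat \<Rightarrow> bool" where
  "ER_pair d H a b \<longleftrightarrow> a < d \<and> b < d \<and> a \<noteq> b \<and>
     (\<forall>j<d. cnj (H j a) * H j b \<in> {1, -1})"

end

theory Submission
  imports Defs
begin

text \<open>Entrywise the equivalence reads \<open>Ht i j = D1 i i * H (inv \<sigma> i) (\<tau> j) * D2 j j\<close>.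
  In the product \<open>cnj (Ht i a2) * Ht i b2\<close> the unimodular row factor \<open>D1 i i\<close> cancels,
  so it equals the corresponding product of the columns \<open>a, b\<close> of \<open>H\<close> in row
  \<open>inv \<sigma> i\<close>, times the fixed phase \<open>cnj (D2 a2 a2) * D2 b2 b2\<close>. As \<open>Ht\<close> is
  dephased, the product in row 0 is 1, which forces that phase to be \<open>\<plusminus>1\<close>.\<close>

lemma mat_mult_diag_left:
  assumes "diag_unitary d D" "i < d"
  shows "mat_mult d D A i j = D i i * A i j"
proof -
  have "mat_mult d D A i j = (\<Sum>k<d. D i k * A k j)" by (simp add: mat_mult_def)
  also have "\<dots> = D i i * A i j"
    using assms by (subst sum.remove[of _ i]) (auto simp: diag_unitary_def intro!: sum.neutral)
  finally show ?thesis .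
qed

lemma mat_mult_diag_right:
  assumes "diag_unitary d D" "j < d"
  shows "mat_mult d A D i j = A i j * D j j"
proof -
  have "mat_mult d A D i j = (\<Sum>k<d. A i k * D k j)" by (simp add: mat_mult_def)
  also have "\<dots> = A i j * D j j"
    using assms by (subst sum.remove[of _ j]) (auto simp: diag_unitary_def intro!: sum.neutral)
  finally show ?thesis .
qed

lemma mat_mult_perm_right:
  assumes "perm_mat_of d \<tau> P" "j < d"
  shows "mat_mult d A P i j = A i (\<tau> j)"
proof -
  have "\<tau> j < d"
    using assms unfolding perm_mat_of_def by (meson lessThan_iff permutes_in_image)
  moreover have "mat_mult d A P i j = (\<Sum>k<d. if k = \<tau> j then A i k else 0)"
    using assms unfolding mat_mult_def by (intro sum.cong) (auto simp: perm_mat_of_def)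
  ultimately show ?thesis by simp
qed

lemma mat_mult_perm_left:
  assumes "perm_mat_of d \<sigma> P" "i < d"
  shows "mat_mult d P A i j = A (inv \<sigma> i) j"
proof -
  have \<sigma>: "\<sigma> permutes {..<d}" using assms by (simp add: perm_mat_of_def)
  then have "inv \<sigma> i < d"
    using assms(2) by (meson lessThan_iff permutes_in_image permutes_inv)
  moreover have "mat_mult d P A i j = (\<Sum>k<d. if k = inv \<sigma> i then A k j else 0)"
    unfolding mat_mult_def
  proof (intro sum.cong refl)
    fix k assume "k \<in> {..<d}"
    moreover have "i = \<sigma> k \<longleftrightarrow> k = inv \<sigma> i" using permutes_inv_eq[OF \<sigma>, of i k] by auto
    ultimately show "P i k * A k j = (if k = inv \<sigma> i then A k j else 0)"
      using assms by (simp add: perm_mat_of_def)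
  qed
  ultimately show ?thesis by simp
qed

lemma monomial_equiv_entry:
  assumes "diag_unitary d D1" "diag_unitary d D2"
    and "perm_mat_of d \<sigma> P1" "perm_mat_of d \<tau> P2" "i < d" "j < d"
  shows "mat_mult d (mat_mult d (mat_mult d (mat_mult d D1 P1) H) P2) D2 i j
     = D1 i i * H (inv \<sigma> i) (\<tau> j) * D2 j j"
proof -
  have "mat_mult d (mat_mult d D1 P1) H i (\<tau> j) = D1 i i * mat_mult d P1 H i (\<tau> j)"
    using mat_mult_diag_left[OF assms(1,5)]
    by (simp add: mat_mult_def sum_distrib_left mult.assoc)
  then show ?thesis
    using mat_mult_perm_left[OF assms(3,5)] mat_mult_diag_right[OF assms(2,6)]
      mat_mult_perm_right[OF assms(4,6)]
    by simp
qed

lemma cnj_mult_self_unimodular: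
  fixes z :: complex
  assumes "cmod z = 1"
  shows "cnj z * z = 1"
  by (metis assms complex_norm_square mult.commute of_real_1 power_one)

lemma cnj_mult_unimodular_cancel:
  fixes z w u v :: complex
  assumes "cmod u = 1"
  shows "cnj (u * z * v) * (u * w * v') = (cnj v * v') * (cnj z * w)"
proof -
  have "cnj (u * z * v) * (u * w * v') = (cnj u * u) * (cnj v * v') * (cnj z * w)"
    by (simp add: algebra_simps)
  then show ?thesis using cnj_mult_self_unimodular[OF assms] by simp
qed

lemma sign_phase_preserved:
  fixes c x y :: complex
  assumes "c * x \<in> {1, -1}" "x \<in> {1, -1}" "y \<in> {1, -1}"
  shows "c * y \<in> {1, -1}"
  using assms by (auto simp: minus_equation_iff)

theorem proposition1:
  fixes d :: nat and H Ht D1 P1 P2 D2 :: cmat and \<tau> :: "nat \<Rightarrow> nat"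
    and a b a2 b2 :: nat
  assumes "complex_hadamard d H" and "dephased d H"
    and "complex_hadamard d Ht" and "dephased d Ht"
    and "diag_unitary d D1" and "diag_unitary d D2"
    and "perm_mat d P1" and "perm_mat_of d \<tau> P2"
    and "mat_eq d Ht (mat_mult d (mat_mult d (mat_mult d (mat_mult d D1 P1) H) P2) D2)"
    and "ER_pair d H a b"
    and "a2 < d" and "b2 < d" and "\<tau> a2 = a" and "\<tau> b2 = b"
  shows "ER_pair d Ht a2 b2"
proof -
  obtain \<sigma> where \<sigma>: "perm_mat_of d \<sigma> P1" using assms(7) by (auto simp: perm_mat_def)
  define c where "c = cnj (D2 a2 a2) * D2 b2 b2"
  have row_ER: "cnj (H (inv \<sigma> i) a) * H (inv \<sigma> i) b \<in> {1, -1}" if "i < d" for i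
    using assms(10) \<sigma> that
    by (meson ER_pair_def lessThan_iff perm_mat_of_def permutes_in_image permutes_inv)
  have product: "cnj (Ht i a2) * Ht i b2 = c * (cnj (H (inv \<sigma> i) a) * H (inv \<sigma> i) b)"
    if "i < d" for i
    using assms(5,9,11-14) monomial_equiv_entry[OF assms(5,6) \<sigma> assms(8) that]
      cnj_mult_unimodular_cancel that
    by (simp add: mat_eq_def diag_unitary_def c_def)
  have "0 < d" using assms(11) by simp
  then have "c * (cnj (H (inv \<sigma> 0) a) * H (inv \<sigma> 0) b) \<in> {1, -1}"
    using product[of 0] assms(4,11,12) by (simp add: dephased_def)
  then have "cnj (Ht i a2) * Ht i b2 \<in> {1, -1}" if "i < d" for i
    using sign_phase_preserved row_ER[OF \<open>0 < d\<close>] row_ER[OF that] product[OF that] by metis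
  moreover have "a2 \<noteq> b2" using assms(10,13,14) by (auto simp: ER_pair_def)
  ultimately show ?thesis using assms(11,12) by (simp add: ER_pair_def)
qed

end
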